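(* Let $B_n(t)=\sum_{k=0}^{n}\binom{n}{k}^2t^k$ for $n\ge0$ and $B_n(t)=0$ for $n<0$, and let $D_m(B(t);n)=\det(B_{i+j+m}(t))_{i,j=0}^{n-1}$. Then for every integer $m\ge1$: $D_{-m}(B(t);n)=0$ for $1\le n\le m$, and for $n\ge m+1$ $$D_{-m}(B(t);n)=(-1)^{\binom{m+1}{2}}\,(2t)^{\,n-m-1}\,p_{m+1}(t,n-m-1)$$ as an identity of polynomials in $t$.
   Context: The Narayana polynomials are $C_0(t)=1$ and $C_n(t)=\sum_{k=0}^{n-1}\binom{n-1}{k}\binom{n}{k}\frac{1}{k+1}t^k$ for $n\ge1$, extended by $C_n(t)=0$ for $n<0$. For integers $m,n\ge0$, $p_m(t,n)=\det(C_{i+j+m}(t))_{i,j=0}^{n-1}$ (the $0\times0$ determinant being $1$). It is known that $\sum_{n\ge0}B_n(t)x^n=\frac{1}{\sqrt{(1-(1+t)x)^2-4tx^2}}$. *)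

theory Defs
  imports "HOL-Computational_Algebra.Polynomial" "Jordan_Normal_Form.Determinant"
begin

definition narayana :: "nat \<Rightarrow> real poly" where
  "narayana n = (if n = 0 then 1 else
     (\<Sum>k<n. monom (real ((n - 1) choose k) * real (n choose k) / real (k + 1)) k))"

text \<open>p_m(t,n) = det (C_{i+j+m}(t))_{i,j=0}^{n-1}; det of the 0x0 matrix is 1.\<close>
definition p_poly :: "nat \<Rightarrow> nat \<Rightarrow> real poly" where
  "p_poly m n = det (mat n n (\<lambda>(i, j). narayana (i + j + m)))"

definition B_poly :: "int \<Rightarrow> real poly" where
  "B_poly n = (if n < 0 then 0 else
     (\<Sum>k\<le>nat n. monom (real ((nat n) choose k) ^ 2) k))"

definition D_B :: "int \<Rightarrow> nat \<Rightarrow> real poly" where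
  "D_B m n = det (mat n n (\<lambda>(i, j). B_poly (int i + int j + m)))"

end

theory Submission
  imports Defs "HOL-Computational_Algebra.Formal_Power_Series"
begin

text \<open>
  Let A = \<Sum> a_k x^k with a_0 = 1 and let C = \<Sum> c_k x^k be its inverse. Multiplying the Hankel
  matrix (a_(i+j-m)) of order m + 1 + s (entries with negative index being 0) on the right by
  the unitriangular Toeplitz matrix (c_(k-j)) makes it block lower triangular: the upper left
  block is the exchange matrix of order m + 1, and the lower right block is a unitriangular
  Toeplitz matrix of A times the Hankel matrix (- c_(i+j+m+2)) of order s.

  For A = \<Sum> B_n(t) x^n the inverse is C = D A with D = 1 - 2(1 + t) x + (1 - t)^2 x^2, because
  A = D^(-1/2): the three-term recurrence of the B_n says 2 D A' + D' A = 0, so D A^2 is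
  constant. A binomial identity gives c_(k+2) = - 2 t C_(k+1)(t), which turns the Hankel
  determinant of order s into (2t)^s p_(m+1)(t, s). For n \<le> m the first row of the matrix is 0.
\<close>

section \<open>Hankel determinants of a power series and of its inverse\<close>

definition hankel_mat :: "nat \<Rightarrow> (nat \<Rightarrow> 'a) \<Rightarrow> 'a mat" where
  "hankel_mat n f = mat n n (\<lambda>(i, j). f (i + j))"

definition lower_toeplitz_mat :: "nat \<Rightarrow> (nat \<Rightarrow> 'a::zero) \<Rightarrow> 'a mat" where
  "lower_toeplitz_mat n f = mat n n (\<lambda>(i, j). if j \<le> i then f (i - j) else 0)"

definition exchange_mat :: "nat \<Rightarrow> 'a::{zero,one} mat" where
  "exchange_mat n = mat n n (\<lambda>(i, j). if i + j + 1 = n then 1 else 0)"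

lemma hankel_mat_carrier [simp]:
  "hankel_mat n f \<in> carrier_mat n n" "dim_row (hankel_mat n f) = n" "dim_col (hankel_mat n f) = n"
  by (simp_all add: hankel_mat_def)

lemma lower_toeplitz_mat_carrier [simp]:
  "lower_toeplitz_mat n f \<in> carrier_mat n n"
  "dim_row (lower_toeplitz_mat n f) = n" "dim_col (lower_toeplitz_mat n f) = n"
  by (simp_all add: lower_toeplitz_mat_def)

lemma exchange_mat_carrier [simp]:
  "exchange_mat n \<in> carrier_mat n n" "dim_row (exchange_mat n) = n" "dim_col (exchange_mat n) = n"
  by (simp_all add: exchange_mat_def)

lemma det_exchange_mat: "det (exchange_mat n :: 'a::comm_ring_1 mat) = (-1) ^ (n choose 2)"
proof (induction n)
  case 0
  then show ?case by (simp add: exchange_mat_def numeral_2_eq_2)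
next
  case (Suc n)
  let ?E = "exchange_mat (Suc n) :: 'a mat"
  have "det ?E = (\<Sum>j<Suc n. ?E $$ (0, j) * cofactor ?E 0 j)"
    by (rule laplace_expansion_row) (auto simp: exchange_mat_def)
  also have "\<dots> = cofactor ?E 0 n"
    by (subst sum.remove[of _ n]) (auto simp: exchange_mat_def intro!: sum.neutral)
  also have "mat_delete ?E 0 n = exchange_mat n"
    by (rule eq_matI) (auto simp: mat_delete_def exchange_mat_def)
  then have "cofactor ?E 0 n = (-1) ^ n * det (exchange_mat n :: 'a mat)"
    by (simp add: cofactor_def)
  finally show ?case
    using Suc.IH by (simp add: power_add numeral_2_eq_2)
qed

lemma det_lower_toeplitz_mat:
  "det (lower_toeplitz_mat n f :: 'a::comm_ring_1 mat) = f 0 ^ n"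
proof -
  have "det (lower_toeplitz_mat n f) = prod_list (diag_mat (lower_toeplitz_mat n f))"
    by (rule det_lower_triangular[of n]) (auto simp: lower_toeplitz_mat_def)
  also have "diag_mat (lower_toeplitz_mat n f) = replicate n (f 0)"
    by (rule nth_equalityI) (auto simp: diag_mat_def lower_toeplitz_mat_def)
  finally show ?thesis by simp
qed

lemma hankel_mult_upper_toeplitz_index:
  fixes h c :: "nat \<Rightarrow> 'a::comm_ring_1"
  assumes "i < n" "k < n"
  shows "(hankel_mat n h * transpose_mat (lower_toeplitz_mat n c)) $$ (i, k)
           = (\<Sum>j\<le>k. h (i + j) * c (k - j))"
proof -
  have "(hankel_mat n h * transpose_mat (lower_toeplitz_mat n c)) $$ (i, k)
          = (\<Sum>j\<in>{..<n}. if j \<le> k then h (i + j) * c (k - j) else 0)"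
    using assms by (auto simp: hankel_mat_def lower_toeplitz_mat_def scalar_prod_def
        atLeast0LessThan intro!: sum.cong)
  also have "\<dots> = (\<Sum>j\<le>k. h (i + j) * c (k - j))"
    using assms by (subst sum.If_cases) (auto intro!: sum.cong)
  finally show ?thesis .
qed

lemma lower_toeplitz_mult_hankel_index:
  fixes a g :: "nat \<Rightarrow> 'a::comm_ring_1"
  assumes "i < n" "k < n"
  shows "(lower_toeplitz_mat n a * hankel_mat n g) $$ (i, k) = (\<Sum>l\<le>i. a (i - l) * g (l + k))"
proof -
  have "(lower_toeplitz_mat n a * hankel_mat n g) $$ (i, k)
          = (\<Sum>l\<in>{..<n}. if l \<le> i then a (i - l) * g (l + k) else 0)"
    using assms by (auto simp: hankel_mat_def lower_toeplitz_mat_def scalar_prod_def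
        atLeast0LessThan intro!: sum.cong)
  also have "\<dots> = (\<Sum>l\<le>i. a (i - l) * g (l + k))"
    using assms by (subst sum.If_cases) (auto intro!: sum.cong)
  finally show ?thesis .
qed


context
  fixes A C :: "'a::idom fps"
  assumes inverse: "A * C = 1" and A_0: "fps_nth A 0 = 1"
begin

lemma inverse_fps_nth_0: "fps_nth C 0 = 1"
  using arg_cong[OF inverse, of "\<lambda>f. fps_nth f 0"] A_0 by simp

lemma convolution_shifted_left:
  "(\<Sum>j\<le>k. (if j < e then 0 else fps_nth A (j - e)) * fps_nth C (k - j)) = (if k = e then 1 else 0)"
proof -
  have "(\<Sum>j\<le>k. fps_nth (fps_X ^ e * A) j * fps_nth C (k - j)) = fps_nth (fps_X ^ e * A * C) k"
    by (simp only: fps_mult_nth atLeast0AtMost)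
  also have "\<dots> = (if k = e then 1 else 0)"
    by (simp add: mult.assoc inverse fps_X_power_nth)
  finally show ?thesis
    by (simp only: fps_X_power_mult_nth)
qed

lemma convolution_shifted_right:
  "(\<Sum>j\<le>k. fps_nth A (Suc d + j) * fps_nth C (k - j)) = (\<Sum>l\<le>d. fps_nth A (d - l) * - fps_nth C (l + k + 1))"
proof -
  let ?c = "\<lambda>p. fps_nth A p * fps_nth C (Suc d + k - p)"
  have "0 = fps_nth (A * C) (Suc d + k)"
    by (simp add: inverse)
  also have "\<dots> = (\<Sum>p\<le>Suc d + k. ?c p)"
    by (simp only: fps_mult_nth atLeast0AtMost)
  also have "{..Suc d + k} = {..<Suc d} \<union> {Suc d..Suc d + k}"
    by auto
  also have "(\<Sum>p\<in>{..<Suc d} \<union> {Suc d..Suc d + k}. ?c p) = (\<Sum>p<Suc d. ?c p) + (\<Sum>p\<in>{Suc d..Suc d + k}. ?c p)"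
    by (rule sum.union_disjoint) auto
  also have "(\<Sum>p\<in>{Suc d..Suc d + k}. ?c p) = (\<Sum>j\<le>k. fps_nth A (Suc d + j) * fps_nth C (k - j))"
    using sum.shift_bounds_cl_nat_ivl[of ?c 0 "Suc d" k] by (simp add: atLeast0AtMost add.commute)
  finally have "(\<Sum>j\<le>k. fps_nth A (Suc d + j) * fps_nth C (k - j)) = - (\<Sum>p<Suc d. ?c p)"
    by (simp add: eq_neg_iff_add_eq_0 add.commute del: sum.lessThan_Suc)
  also have "\<dots> = (\<Sum>l\<le>d. fps_nth A (d - l) * - fps_nth C (l + k + 1))"
    unfolding sum_negf[symmetric] lessThan_Suc_atMost
    by (rule sum.reindex_bij_witness[where i = "\<lambda>l. d - l" and j = "\<lambda>p. d - p"])
       (auto simp: Suc_diff_le algebra_simps)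
  finally show ?thesis .
qed

text \<open>The lower left block is left unspecified; it does not enter the determinant.\<close>

lemma shifted_hankel_mult_upper_toeplitz:
  fixes m s :: nat
  defines "H \<equiv> hankel_mat (m + 1 + s) (\<lambda>k. if k < m then 0 else fps_nth A (k - m))"
    and "W \<equiv> transpose_mat (lower_toeplitz_mat (m + 1 + s) (fps_nth C))"
  shows "H * W = four_block_mat (exchange_mat (m + 1)) (0\<^sub>m (m + 1) s)
                   (mat s (m + 1) (\<lambda>(i, k). (H * W) $$ (m + 1 + i, k)))
                   (lower_toeplitz_mat s (fps_nth A) * hankel_mat s (\<lambda>k. - fps_nth C (k + m + 2)))"
    (is "_ = four_block_mat ?J _ ?Y ?X")
proof (rule eq_matI)
  fix i k
  assume "i < dim_row (four_block_mat ?J (0\<^sub>m (m + 1) s) ?Y ?X)"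
    and "k < dim_col (four_block_mat ?J (0\<^sub>m (m + 1) s) ?Y ?X)"
  then have i: "i < m + 1 + s" and k: "k < m + 1 + s"
    by simp_all
  have HW: "(H * W) $$ (i, k) = (\<Sum>j\<le>k. (if i + j < m then 0 else fps_nth A (i + j - m)) * fps_nth C (k - j))"
    unfolding H_def W_def by (rule hankel_mult_upper_toeplitz_index[OF i k])
  show "(H * W) $$ (i, k) = four_block_mat ?J (0\<^sub>m (m + 1) s) ?Y ?X $$ (i, k)"
  proof (cases "i \<le> m")
    case True
    have "(H * W) $$ (i, k) = (\<Sum>j\<le>k. (if j < m - i then 0 else fps_nth A (j - (m - i))) * fps_nth C (k - j))"
      unfolding HW using True by (intro sum.cong) (auto simp: add.commute)
    also have "\<dots> = (if k = m - i then 1 else 0)"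
      by (rule convolution_shifted_left)
    finally show ?thesis
      using True i k by (auto simp: exchange_mat_def)
  next
    case False
    define i' where "i' = i - (m + 1)"
    have i': "i = m + 1 + i'"
      using False by (simp add: i'_def)
    show ?thesis
    proof (cases "k \<le> m")
      case True
      then show ?thesis using i i' by simp
    next
      case False
      define k' where "k' = k - (m + 1)"
      have k': "k = m + 1 + k'"
        using False by (simp add: k'_def)
      have "(H * W) $$ (i, k) = (\<Sum>j\<le>k. fps_nth A (Suc i' + j) * fps_nth C (k - j))"
        unfolding HW by (intro sum.cong) (auto simp: i')
      also have "\<dots> = (\<Sum>l\<le>i'. fps_nth A (i' - l) * - fps_nth C (l + k' + m + 2))"
        unfolding convolution_shifted_right by (simp add: k' ac_simps)
      also have "\<dots> = ?X $$ (i', k')"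
        using i k i' k' lower_toeplitz_mult_hankel_index[of i' s k' "fps_nth A" "\<lambda>k. - fps_nth C (k + m + 2)"]
        by simp
      finally show ?thesis
        using i k i' k' by simp
    qed
  qed
qed (simp_all add: H_def W_def)

lemma det_shifted_hankel_eq_inverse_hankel:
  "det (hankel_mat (m + 1 + s) (\<lambda>k. if k < m then 0 else fps_nth A (k - m)))
     = (-1) ^ ((m + 1) choose 2) * det (hankel_mat s (\<lambda>k. - fps_nth C (k + m + 2)))"
proof -
  let ?H = "hankel_mat (m + 1 + s) (\<lambda>k. if k < m then 0 else fps_nth A (k - m))"
  let ?W = "transpose_mat (lower_toeplitz_mat (m + 1 + s) (fps_nth C))"
  let ?L = "lower_toeplitz_mat s (fps_nth A)"
  let ?G = "hankel_mat s (\<lambda>k. - fps_nth C (k + m + 2))"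
  have "det ?W = 1"
    by (simp add: det_transpose[of _ "m + 1 + s"] det_lower_toeplitz_mat inverse_fps_nth_0)
  then have "det ?H = det (?H * ?W)"
    by (simp add: det_mult[of _ "m + 1 + s"])
  also have "\<dots> = det (exchange_mat (m + 1) :: 'a mat) * det (?L * ?G)"
    by (subst shifted_hankel_mult_upper_toeplitz, rule det_four_block_mat_upper_right_zero) auto
  also have "det (?L * ?G) = det ?G"
    by (simp add: det_mult[of _ s] det_lower_toeplitz_mat A_0)
  finally show ?thesis
    by (simp add: det_exchange_mat)
qed

end

section \<open>Coefficient identities for the B_n and the Narayana polynomials\<close>

lemma real_binomial_Suc_absorb:
  "(real k + 1) * real (n choose Suc k) = (real n - real k) * real (n choose k)"
  using gbinomial_mult_1[of "real n" k] by (simp add: binomial_gbinomial algebra_simps)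

lemma binomial_consecutive_identities:
  fixes n j :: nat
  defines "a \<equiv> real (n choose (j + 2))" and "b \<equiv> real (n choose (j + 1))" and "c \<equiv> real (n choose j)"
  shows "(real j + 2) * (a * c - b\<^sup>2) + b * (b + c) = 0"
    and "(real n + 2) * a * c + a * b + b * c = real n * b\<^sup>2"
proof -
  consider "n \<le> j" | "j < n" by linarith
  then have "(real j + 2) * (a * c - b\<^sup>2) + b * (b + c) = 0
           \<and> (real n + 2) * a * c + a * b + b * c = real n * b\<^sup>2"
  proof cases
    case 1
    then show ?thesis by (simp add: a_def b_def binomial_eq_0)
  next
    case 2
    have ab: "(real j + 2) * a = (real n - real j - 1) * b"
      using real_binomial_Suc_absorb[of "j + 1" n] by (simp add: a_def b_def algebra_simps)
    have bc: "(real n - real j) * c = (real j + 1) * b"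
      using real_binomial_Suc_absorb[of j n] by (simp add: b_def c_def algebra_simps)
    have ac: "(real n - real j) * (real j + 2) * (a * c) = (real n - real j - 1) * (real j + 1) * b\<^sup>2"
    proof -
      have "(real n - real j) * (real j + 2) * (a * c) = ((real j + 2) * a) * ((real n - real j) * c)"
        by (simp only: ac_simps)
      also have "\<dots> = (real n - real j - 1) * (real j + 1) * b\<^sup>2"
        unfolding ab bc by (simp add: power2_eq_square ac_simps)
      finally show ?thesis .
    qed
    have "(real n - real j) * ((real j + 2) * (a * c - b\<^sup>2) + b * (b + c))
        = (real n - real j) * (real j + 2) * (a * c) + b * ((real n - real j) * c)
          - (real n - real j) * (real j + 1) * b\<^sup>2"
      by (simp add: algebra_simps power2_eq_square)
    also have "\<dots> = 0"
      unfolding ac bc by (simp add: algebra_simps power2_eq_square)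
    finally have first: "(real n - real j) * ((real j + 2) * (a * c - b\<^sup>2) + b * (b + c)) = 0" .
    have "(real j + 2) * (real n - real j) * ((real n + 2) * a * c + a * b + b * c - real n * b\<^sup>2)
        = (real n + 2) * ((real n - real j) * (real j + 2) * (a * c))
          + (real n - real j) * b * ((real j + 2) * a) + (real j + 2) * b * ((real n - real j) * c)
          - real n * (real j + 2) * (real n - real j) * b\<^sup>2"
      by (simp add: algebra_simps power2_eq_square)
    also have "\<dots> = 0"
      unfolding ac ab bc by (simp add: algebra_simps power2_eq_square)
    finally have second:
      "(real j + 2) * (real n - real j) * ((real n + 2) * a * c + a * b + b * c - real n * b\<^sup>2) = 0" .
    show ?thesis
      using first second 2 by simp
  qed
  then show "(real j + 2) * (a * c - b\<^sup>2) + b * (b + c) = 0"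
    and "(real n + 2) * a * c + a * b + b * c = real n * b\<^sup>2"
    by simp_all
qed

definition B_fps :: "real poly fps" where
  "B_fps = Abs_fps (\<lambda>n. B_poly (int n))"

lemma coeff_B_fps: "coeff (fps_nth B_fps n) k = real (n choose k) ^ 2"
  by (simp add: B_fps_def B_poly_def coeff_sum coeff_monom binomial_eq_0)

lemma fps_nth_B_fps_initial: "fps_nth B_fps 0 = 1" "fps_nth B_fps 1 = [:1, 1:]"
  by (simp_all add: B_fps_def B_poly_def monom_altdef)

lemma coeff_narayana: "coeff (narayana n) k = real ((n - 1) choose k) * real (n choose k) / real (k + 1)"
  by (cases "n = 0") (auto simp: narayana_def coeff_sum coeff_monom binomial_eq_0)

lemma coeff_linear_factor_mult:
  fixes p :: "'a::comm_ring_1 poly"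
  shows "coeff ([:1, 1:] * p) (Suc k) = coeff p (Suc k) + coeff p k"
  by simp

lemma coeff_quadratic_factor_mult:
  fixes p :: "'a::comm_ring_1 poly"
  shows "coeff ([:1, -1:] ^ 2 * p) (Suc (Suc k)) = coeff p (Suc (Suc k)) - 2 * coeff p (Suc k) + coeff p k"
  by (simp add: power2_eq_square mult.assoc algebra_simps)

lemma B_fps_recurrence:
  "of_nat (n + 2) * fps_nth B_fps (n + 2) - of_nat (2 * n + 3) * [:1, 1:] * fps_nth B_fps (n + 1)
     + of_nat (n + 1) * [:1, -1:] ^ 2 * fps_nth B_fps n = 0"
    (is "?R = 0")
proof (rule poly_eqI)
  fix i :: nat
  consider "i = 0" | "i = 1" | j where "i = Suc (Suc j)"
    using le_Suc_ex[of 2 i] less_2_cases[of i] by (cases "i < 2") auto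
  then show "coeff ?R i = coeff 0 i"
  proof cases
    case 1
    then show ?thesis
      unfolding mult.assoc of_nat_mult_conv_smult
      by (simp add: coeff_B_fps power2_eq_square algebra_simps)
  next
    case 2
    then show ?thesis
      unfolding mult.assoc of_nat_mult_conv_smult
      by (simp add: coeff_B_fps power2_eq_square algebra_simps)
  next
    case 3
    define a b c where "a = real (n choose Suc (Suc j))" and "b = real (n choose Suc j)"
      and "c = real (n choose j)"
    have "coeff ?R i = real (Suc (Suc n)) * real (Suc (Suc n) choose Suc (Suc j)) ^ 2
        - real (2 * n + 3) * (real (Suc n choose Suc (Suc j)) ^ 2 + real (Suc n choose Suc j) ^ 2)
        + real (Suc n) * (real (n choose Suc (Suc j)) ^ 2 - 2 * real (n choose Suc j) ^ 2 + real (n choose j) ^ 2)"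
      unfolding 3 add_2_eq_Suc' Suc_eq_plus1[symmetric] mult.assoc
      unfolding of_nat_mult_conv_smult
      by (simp only: coeff_add coeff_diff coeff_smult coeff_linear_factor_mult
          coeff_quadratic_factor_mult coeff_B_fps)
    also have "\<dots> = (real n + 2) * (a + 2 * b + c)\<^sup>2 - (2 * real n + 3) * ((a + b)\<^sup>2 + (b + c)\<^sup>2)
          + (real n + 1) * (a\<^sup>2 - 2 * b\<^sup>2 + c\<^sup>2)"
      by (simp add: a_def b_def c_def add_ac)
    also have "\<dots> = 2 * ((real n + 2) * a * c + a * b + b * c - real n * b\<^sup>2)"
      by (simp add: power2_eq_square algebra_simps)
    also have "\<dots> = 0"
      using binomial_consecutive_identities(2)[of n j] by (simp add: a_def b_def c_def)
    finally show ?thesis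
      by simp
  qed
qed

lemma B_fps_narayana:
  "fps_nth B_fps (q + 2) - 2 * [:1, 1:] * fps_nth B_fps (q + 1) + [:1, -1:] ^ 2 * fps_nth B_fps q
     = - [:0, 2:] * narayana (q + 1)"
    (is "?L = ?N")
proof (rule poly_eqI)
  fix i :: nat
  consider "i = 0" | "i = 1" | j where "i = Suc (Suc j)"
    using le_Suc_ex[of 2 i] less_2_cases[of i] by (cases "i < 2") auto
  then show "coeff ?L i = coeff ?N i"
  proof cases
    case 1
    then show ?thesis
      by (simp add: coeff_B_fps numeral_mult_conv_smult power2_eq_square algebra_simps)
  next
    case 2
    then show ?thesis
      by (simp add: coeff_B_fps coeff_narayana numeral_mult_conv_smult power2_eq_square algebra_simps)
  next
    case 3
    define a b c where "a = real (q choose Suc (Suc j))" and "b = real (q choose Suc j)"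
      and "c = real (q choose j)"
    have "coeff ?L i = real (Suc (Suc q) choose Suc (Suc j)) ^ 2
        - 2 * (real (Suc q choose Suc (Suc j)) ^ 2 + real (Suc q choose Suc j) ^ 2)
        + (real (q choose Suc (Suc j)) ^ 2 - 2 * real (q choose Suc j) ^ 2 + real (q choose j) ^ 2)"
      unfolding 3 add_2_eq_Suc' Suc_eq_plus1[symmetric] mult.assoc
      by (simp only: coeff_add coeff_diff numeral_mult_conv_smult coeff_smult coeff_linear_factor_mult
          coeff_quadratic_factor_mult coeff_B_fps)
    also have "\<dots> = (a + 2 * b + c)\<^sup>2 - 2 * ((a + b)\<^sup>2 + (b + c)\<^sup>2) + (a\<^sup>2 - 2 * b\<^sup>2 + c\<^sup>2)"
      by (simp add: a_def b_def c_def add_ac)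
    also have "\<dots> = 2 * (a * c - b\<^sup>2)"
      by (simp add: power2_eq_square algebra_simps)
    also have "\<dots> = - 2 * (b * (b + c) / (real j + 2))"
      using binomial_consecutive_identities(1)[of j q] by (simp add: a_def b_def c_def field_simps)
    also have "\<dots> = coeff ?N i"
      by (simp add: 3 coeff_narayana b_def c_def add_ac)
    finally show ?thesis .
  qed
qed

section \<open>The generating function of the B_n\<close>

definition trinomial_fps :: "'a::comm_ring_1 \<Rightarrow> 'a \<Rightarrow> 'a fps" where
  "trinomial_fps p q = 1 - fps_const (2 * p) * fps_X + fps_const q * fps_X ^ 2"

lemma fps_nth_trinomial_fps:
  "fps_nth (trinomial_fps p q) n = (if n = 0 then 1 else if n = 1 then - 2 * p else if n = 2 then q else 0)"
  by (simp add: trinomial_fps_def fps_X_power_nth)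

lemma fps_nth_trinomial_fps_mult:
  "fps_nth (trinomial_fps p q * g) 0 = fps_nth g 0"
  "fps_nth (trinomial_fps p q * g) (Suc 0) = fps_nth g 1 - 2 * p * fps_nth g 0"
  "fps_nth (trinomial_fps p q * g) (Suc (Suc n)) = fps_nth g (n + 2) - 2 * p * fps_nth g (n + 1) + q * fps_nth g n"
  by (simp_all add: trinomial_fps_def ring_distribs mult.assoc fps_X_power_mult_nth numeral_2_eq_2)

lemma fps_nth_trinomial_fps_ode:
  "fps_nth (fps_const 2 * trinomial_fps p q * fps_deriv g + fps_deriv (trinomial_fps p q) * g) (Suc k)
     = 2 * (of_nat (k + 2) * fps_nth g (k + 2) - of_nat (2 * k + 3) * p * fps_nth g (k + 1)
            + of_nat (k + 1) * q * fps_nth g k)"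
proof -
  have "fps_deriv (trinomial_fps p q) = fps_const (- 2 * p) + fps_const (2 * q) * fps_X"
    by (rule fps_ext) (auto simp: fps_nth_trinomial_fps fps_numeral_nth le_Suc_eq mult.commute)
  then have "fps_nth (fps_const 2 * trinomial_fps p q * fps_deriv g + fps_deriv (trinomial_fps p q) * g) (Suc k)
      = 2 * fps_nth (trinomial_fps p q * fps_deriv g) (Suc k) - 2 * p * fps_nth g (Suc k) + 2 * q * fps_nth g k"
    by (simp add: mult.assoc distrib_right fps_X_mult_nth)
  also have "fps_nth (trinomial_fps p q * fps_deriv g) (Suc k)
      = of_nat (k + 2) * fps_nth g (k + 2) - 2 * p * (of_nat (k + 1) * fps_nth g (k + 1))
        + q * (of_nat k * fps_nth g k)"
    by (cases k) (simp_all add: fps_nth_trinomial_fps_mult fps_nth_trinomial_fps)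
  finally show ?thesis
    by (simp add: algebra_simps)
qed

text \<open>With [:1, 1:] = 1 + t and [:1, -1:] = 1 - t this is (1 - (1 + t) x)^2 - 4 t x^2, the radicand
  of the known generating function of the B_n.\<close>

abbreviation B_disc :: "real poly fps" where
  "B_disc \<equiv> trinomial_fps [:1, 1:] ([:1, -1:] ^ 2)"

lemma B_fps_ode: "fps_const 2 * B_disc * fps_deriv B_fps + fps_deriv B_disc * B_fps = 0"
proof (rule fps_ext)
  fix n
  show "fps_nth (fps_const 2 * B_disc * fps_deriv B_fps + fps_deriv B_disc * B_fps) n = fps_nth 0 n"
  proof (cases n)
    case 0
    then show ?thesis
      by (simp add: trinomial_fps_def fps_nth_B_fps_initial[unfolded One_nat_def])
  next
    case (Suc k)
    then show ?thesis
      by (simp only: fps_nth_trinomial_fps_ode B_fps_recurrence) simp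
  qed
qed

lemma B_disc_mult_B_fps_square: "B_disc * B_fps ^ 2 = 1"
proof -
  have "fps_deriv (B_disc * B_fps ^ 2) = B_disc * (fps_const 2 * fps_deriv B_fps * B_fps) + fps_deriv B_disc * B_fps ^ 2"
    by (simp add: fps_deriv_power)
  also have "\<dots> = B_fps * (fps_const 2 * B_disc * fps_deriv B_fps + fps_deriv B_disc * B_fps)"
    by (simp only: power2_eq_square ring_distribs ac_simps)
  also have "\<dots> = 0"
    by (simp only: B_fps_ode mult_zero_right)
  finally have "B_disc * B_fps ^ 2 = fps_const (fps_nth (B_disc * B_fps ^ 2) 0)"
    by (simp only: fps_deriv_eq_0_iff)
  also have "fps_nth (B_disc * B_fps ^ 2) 0 = 1"
    by (simp add: trinomial_fps_def fps_nth_power_0 fps_nth_B_fps_initial)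
  finally show ?thesis
    by simp
qed

lemma fps_nth_B_disc_mult_B_fps:
  "fps_nth (B_disc * B_fps) (k + 2) = - [:0, 2:] * narayana (k + 1)"
  using B_fps_narayana[of k] by (simp add: fps_nth_trinomial_fps_mult)

lemma B_disc_hankel_eq_narayana_hankel:
  "hankel_mat s (\<lambda>k. - fps_nth (B_disc * B_fps) (k + m + 2))
     = [:0, 2:] \<cdot>\<^sub>m hankel_mat s (\<lambda>k. narayana (k + (m + 1)))"
proof (rule eq_matI)
  fix i j
  assume "i < dim_row ([:0, 2:] \<cdot>\<^sub>m hankel_mat s (\<lambda>k. narayana (k + (m + 1))))"
    and "j < dim_col ([:0, 2:] \<cdot>\<^sub>m hankel_mat s (\<lambda>k. narayana (k + (m + 1))))"
  then show "hankel_mat s (\<lambda>k. - fps_nth (B_disc * B_fps) (k + m + 2)) $$ (i, j)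
      = ([:0, 2:] \<cdot>\<^sub>m hankel_mat s (\<lambda>k. narayana (k + (m + 1)))) $$ (i, j)"
    using fps_nth_B_disc_mult_B_fps[of "i + j + m"] by (simp add: hankel_mat_def)
qed simp_all

lemma B_poly_int_diff: "B_poly (int k - int m) = (if k < m then 0 else fps_nth B_fps (k - m))"
proof (cases "k < m")
  case False
  moreover have "nat (int k - int m) = k - m"
    by simp
  ultimately show ?thesis
    by (simp add: B_poly_def B_fps_def)
qed (simp add: B_poly_def)

lemma D_B_negative_eq_det_hankel:
  "D_B (- int m) n = det (hankel_mat n (\<lambda>k. if k < m then 0 else fps_nth B_fps (k - m)))"
  unfolding D_B_def hankel_mat_def
  by (rule arg_cong[where f = det], rule eq_matI) (auto simp: B_poly_int_diff[of "_ + _", simplified])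

theorem theorem9:
  fixes m :: nat
  assumes "m \<ge> 1"
  shows "(\<forall>n. 1 \<le> n \<and> n \<le> m \<longrightarrow> D_B (- int m) n = 0) \<and>
         (\<forall>n. n \<ge> m + 1 \<longrightarrow>
            D_B (- int m) n = (-1) ^ ((m + 1) choose 2) * [:0, 2:] ^ (n - m - 1) * p_poly (m + 1) (n - m - 1))"
proof (intro conjI allI impI)
  fix n
  assume n: "1 \<le> n \<and> n \<le> m"
  let ?H = "hankel_mat n (\<lambda>k. if k < m then 0 else fps_nth B_fps (k - m))"
  have "det ?H = (\<Sum>j<n. ?H $$ (0, j) * cofactor ?H 0 j)"
    by (rule laplace_expansion_row) (use n in auto)
  also have "\<dots> = 0"
    by (rule sum.neutral) (use n in \<open>auto simp: hankel_mat_def\<close>)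
  finally show "D_B (- int m) n = 0"
    by (simp add: D_B_negative_eq_det_hankel)
next
  fix n
  assume "m + 1 \<le> n"
  then obtain s where n: "n = m + 1 + s"
    using le_Suc_ex by blast
  have inverse: "B_fps * (B_disc * B_fps) = 1"
    using B_disc_mult_B_fps_square by (simp add: power2_eq_square ac_simps)
  have "D_B (- int m) n = (-1) ^ ((m + 1) choose 2)
      * det (hankel_mat s (\<lambda>k. - fps_nth (B_disc * B_fps) (k + m + 2)))"
    unfolding D_B_negative_eq_det_hankel n
    by (rule det_shifted_hankel_eq_inverse_hankel[OF inverse fps_nth_B_fps_initial(1)])
  also have "\<dots> = (-1) ^ ((m + 1) choose 2) * [:0, 2:] ^ s * p_poly (m + 1) s"
    unfolding B_disc_hankel_eq_narayana_hankel det_smult by (simp add: p_poly_def hankel_mat_def)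
  finally show "D_B (- int m) n = (-1) ^ ((m + 1) choose 2) * [:0, 2:] ^ (n - m - 1) * p_poly (m + 1) (n - m - 1)"
    by (simp add: n)
qed

end
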